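(* Let $s\ge1$. If $f\in C^2(\mathbb{R}^s)$ and $H_n(f)<\infty$ for some $n\in\mathbb{N}_0$, then for any $n_0\in\mathbb{N}_0$ there exists a constant $C>0$ depending only on $n_0$ and $f$ such that $$\left|\sum_{\alpha\in\mathbb{Z}^s}\left|\hat{\boldsymbol d}_\alpha^n(f)\right|_2-\|f\|_{TV}\right|\le C\,2^{-n}\int_{\mathbb{R}^s}\left|D^2f(x)\right|_F\,dx\qquad\text{for all } n\ge n_0.$$
   Context: Univariate Haar functions: $\psi_0:=\chi_{[0,1]}$, $\psi_1:=\chi_{[0,\frac12]}-\chi_{[\frac12,1]}$; for $\theta\in\{0,1\}^s$, $\psi_\theta(x):=\prod_{j=1}^s\psi_{\theta_j}(x_j)$, and $d_{\theta,\alpha}^n(f):=2^{ns/2}\int_{\mathbb{R}^s}f(t)\psi_\theta(2^nt-\alpha)\,dt$ for $n\in\mathbb{N}_0$, $\alpha\in\mathbb{Z}^s$. Let $\epsilon_j\in\{0,1\}^s$ denote the $j$-th unit vector, and define $\hat{\boldsymbol d}_\alpha^n(f):=-2^{n(1-s/2)+2}\big(d^n_{\epsilon_1,\alpha}(f),\dots,d^n_{\epsilon_s,\alpha}(f)\big)\in\mathbb{R}^s$. $|\cdot|_2$ is the Euclidean norm, $\|f\|_{TV}:=\int_{\mathbb{R}^s}|\nabla f(x)|_2\,dx$. The Frobenius norm of the Hessian is $|D^2f(x)|_F:=\big(\sum_{j,k=1}^s(\partial^2f(x)/\partial x_j\partial x_k)^2\big)^{1/2}$. With $x_\alpha^n:=2^{-n}(\alpha+\frac12(1,\dots,1))$,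 $H_n(f):=\sum_{\alpha\in\mathbb{Z}^s}2^{-ns}\max_{x\in x_\alpha^n+2^{-n}[-\frac12,\frac12]^s}|D^2f(x)|_F$ (possibly $+\infty$). *)

theory Defs
  imports "HOL-Analysis.Analysis"
begin

text \<open>Dimension s = CARD('n); points of R^s are vectors real^'n (Euclidean norm).\<close>

definition unitvec :: "'n::finite \<Rightarrow> real^'n" where
  "unitvec j = axis j 1"

definition partial :: "'n::finite \<Rightarrow> (real^'n \<Rightarrow> real) \<Rightarrow> real^'n \<Rightarrow> real" where
  "partial j g x = deriv (\<lambda>t. g (x + t *\<^sub>R unitvec j)) 0"

definition has_partial :: "'n::finite \<Rightarrow> (real^'n \<Rightarrow> real) \<Rightarrow> real^'n \<Rightarrow> bool" where
  "has_partial j g x \<longleftrightarrow> (\<lambda>t. g (x + t *\<^sub>R unitvec j)) differentiable (at 0)"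

definition C2 :: "(real^'n::finite \<Rightarrow> real) \<Rightarrow> bool" where
  "C2 f \<longleftrightarrow> continuous_on UNIV f
     \<and> (\<forall>j x. has_partial j f x) \<and> (\<forall>j. continuous_on UNIV (partial j f))
     \<and> (\<forall>j k x. has_partial j (partial k f) x)
     \<and> (\<forall>j k. continuous_on UNIV (partial j (partial k f)))"

definition grad :: "(real^'n::finite \<Rightarrow> real) \<Rightarrow> real^'n \<Rightarrow> real^'n" where
  "grad f x = (\<chi> j. partial j f x)"

definition hessF :: "(real^'n::finite \<Rightarrow> real) \<Rightarrow> real^'n \<Rightarrow> real" where
  "hessF f x = sqrt (\<Sum>j\<in>UNIV. \<Sum>k\<in>UNIV. (partial j (partial k f) x)\<^sup>2)"

definition TV :: "(real^'n::finite \<Rightarrow> real) \<Rightarrow> ennreal" where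
  "TV f = (\<integral>\<^sup>+ x. ennreal (norm (grad f x)) \<partial>lborel)"

definition hess_int :: "(real^'n::finite \<Rightarrow> real) \<Rightarrow> ennreal" where
  "hess_int f = (\<integral>\<^sup>+ x. ennreal (hessF f x) \<partial>lborel)"

definition psi0 :: "real \<Rightarrow> real" where
  "psi0 x = indicator {0..1} x"

definition psi1 :: "real \<Rightarrow> real" where
  "psi1 x = indicator {0..1/2} x - indicator {1/2..1} x"

text \<open>theta \<in> {0,1}^s encoded as 'n \<Rightarrow> bool (True = 1).\<close>
definition psi :: "('n::finite \<Rightarrow> bool) \<Rightarrow> real^'n \<Rightarrow> real" where
  "psi \<theta> x = (\<Prod>j\<in>UNIV. (if \<theta> j then psi1 else psi0) (x $ j))"

definition of_intvec :: "int^'n::finite \<Rightarrow> real^'n" where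
  "of_intvec \<alpha> = (\<chi> j. real_of_int (\<alpha> $ j))"

definition dcoef :: "nat \<Rightarrow> ('n::finite \<Rightarrow> bool) \<Rightarrow> int^'n \<Rightarrow> (real^'n \<Rightarrow> real) \<Rightarrow> real" where
  "dcoef n \<theta> \<alpha> f = 2 powr (real n * real CARD('n) / 2) *
     (\<integral>t. f t * psi \<theta> ((2::real)^n *\<^sub>R t - of_intvec \<alpha>) \<partial>lborel)"

definition eps :: "'n::finite \<Rightarrow> 'n \<Rightarrow> bool" where
  "eps j = (\<lambda>k. k = j)"

definition dhat :: "nat \<Rightarrow> int^'n::finite \<Rightarrow> (real^'n \<Rightarrow> real) \<Rightarrow> real^'n" where
  "dhat n \<alpha> f = (\<chi> j. - (2 powr (real n * (1 - real CARD('n) / 2) + 2)) * dcoef n (eps j) \<alpha> f)"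

definition xpt :: "nat \<Rightarrow> int^'n::finite \<Rightarrow> real^'n" where
  "xpt n \<alpha> = (2 powr (- real n)) *\<^sub>R (of_intvec \<alpha> + (\<chi> j. 1/2))"

definition cube :: "nat \<Rightarrow> int^'n::finite \<Rightarrow> (real^'n) set" where
  "cube n \<alpha> = (\<lambda>y. xpt n \<alpha> + (2 powr (- real n)) *\<^sub>R y) ` {y. \<forall>j. y $ j \<in> {-1/2..1/2}}"

definition H :: "nat \<Rightarrow> (real^'n::finite \<Rightarrow> real) \<Rightarrow> ennreal" where
  "H n f = (\<Sum>\<^sub>\<infinity>\<alpha>\<in>(UNIV::(int^'n) set).
      ennreal (2 powr (- real n * real CARD('n)) * (SUP x\<in>cube n \<alpha>. hessF f x)))"

definition dsum :: "nat \<Rightarrow> (real^'n::finite \<Rightarrow> real) \<Rightarrow> ennreal" where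
  "dsum n f = (\<Sum>\<^sub>\<infinity>\<alpha>\<in>(UNIV::(int^'n) set). ennreal (norm (dhat n \<alpha> f)))"

end

(*
  Let h = 2^-n and let Q be a dyadic cube of side h with lower corner c. Since psi_(eps j) is 1 on
  the lower half Q' of Q in direction j and -1 on its translate Q' + h/2 e_j, the j-th component of
  dhat for Q is 4/h times the integral over Q' of f (t + h/2 e_j) - f t. The partial derivatives of f
  vary by at most s h max_Q |D^2 f|_F on Q, so this difference is h/2 times the j-th partial of f
  at c up to an error of h/2 s h max_Q |D^2 f|_F. Hence |dhat| for Q equals h^s |grad f c| up to
  s^2 h^(s+1) max_Q |D^2 f|_F, and so does the integral of |grad f| over Q. Summing over the
  half-open cubes that tile R^s gives |sum |dhat| - TV f| <= 2 s^2 2^-n H_n(f).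

  It remains to bound H_n(f) by a multiple of the integral of |D^2 f|_F for n >= n0. H_n(f) is
  non-increasing in n, and H_n(f) <= 2^((m-n)s) H_m(f) for n <= m since the maximum over a cube is
  attained in one of its subcubes; so H_n(f) is bounded for n >= n0 once H_m(f) is finite. A finite
  bound is a multiple of the integral unless the integral vanishes, and then D^2 f = 0 by continuity
  and H_n(f) = 0.
*)
theory Submission
  imports Defs
begin

lemma summable_on_ennreal [simp]: "(f :: 'a \<Rightarrow> ennreal) summable_on A"
  by (simp add: nonneg_summable_on_complete)

lemma infsum_cmult_right_ennreal:
  fixes f :: "'a \<Rightarrow> ennreal"
  assumes "c < top"
  shows "(\<Sum>\<^sub>\<infinity>x\<in>A. c * f x) = c * (\<Sum>\<^sub>\<infinity>x\<in>A. f x)"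
proof -
  have "(sum f \<longlongrightarrow> (\<Sum>\<^sub>\<infinity>x\<in>A. f x)) (finite_subsets_at_top A)"
    using has_sum_infsum[of f A] by (simp add: has_sum_def)
  then have "((\<lambda>F. c * sum f F) \<longlongrightarrow> c * (\<Sum>\<^sub>\<infinity>x\<in>A. f x)) (finite_subsets_at_top A)"
    by (rule ennreal_tendsto_cmult[OF assms])
  then show ?thesis
    by (intro infsumI) (simp add: has_sum_def sum_distrib_left)
qed

lemma infsum_ennreal_eq_suminf:
  fixes f :: "'i::countable \<Rightarrow> ennreal"
  shows "(\<Sum>\<^sub>\<infinity>i. f i) = (\<Sum>k. if k \<in> range (to_nat :: 'i \<Rightarrow> nat) then f (from_nat k) else 0)"
    (is "_ = suminf ?g")
proof -
  have "(\<Sum>\<^sub>\<infinity>i. f i) = infsum (?g \<circ> (to_nat :: 'i \<Rightarrow> nat)) UNIV"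
    by (rule infsum_cong) simp
  also have "\<dots> = (\<Sum>\<^sub>\<infinity>k\<in>range (to_nat :: 'i \<Rightarrow> nat). ?g k)"
    by (subst infsum_reindex) (auto intro: inj_to_nat)
  also have "\<dots> = (\<Sum>\<^sub>\<infinity>k. ?g k)"
    by (intro infsum_cong_neutral) auto
  also have "\<dots> = suminf ?g"
    using has_sum_imp_sums[OF has_sum_infsum[of ?g UNIV]] by (simp add: sums_iff)
  finally show ?thesis .
qed

lemma nn_integral_infsum:
  fixes f :: "'i::countable \<Rightarrow> 'a \<Rightarrow> ennreal"
  assumes [measurable]: "\<And>i. f i \<in> borel_measurable M"
  shows "(\<integral>\<^sup>+x. (\<Sum>\<^sub>\<infinity>i. f i x) \<partial>M) = (\<Sum>\<^sub>\<infinity>i. \<integral>\<^sup>+x. f i x \<partial>M)"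
proof -
  have "(\<integral>\<^sup>+x. (\<Sum>\<^sub>\<infinity>i. f i x) \<partial>M) =
      (\<integral>\<^sup>+x. (\<Sum>k. if k \<in> range (to_nat :: 'i \<Rightarrow> nat) then f (from_nat k) x else 0) \<partial>M)"
    by (subst infsum_ennreal_eq_suminf) simp
  also have "\<dots> = (\<Sum>k. \<integral>\<^sup>+x. (if k \<in> range (to_nat :: 'i \<Rightarrow> nat) then f (from_nat k) x else 0) \<partial>M)"
    by (rule nn_integral_suminf) simp
  also have "\<dots> = (\<Sum>\<^sub>\<infinity>i. \<integral>\<^sup>+x. f i x \<partial>M)"
    by (subst infsum_ennreal_eq_suminf) (auto intro: suminf_cong)
  finally show ?thesis .
qed

lemma ennreal_le_cmult_if_bounded:
  fixes x :: "'a \<Rightarrow> ennreal"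
  assumes "B < \<infinity>" and bounded: "\<And>i. P i \<Longrightarrow> x i \<le> B" and zero: "\<And>i. I = 0 \<Longrightarrow> x i = 0"
  shows "\<exists>c>0. \<forall>i. P i \<longrightarrow> x i \<le> ennreal c * I"
proof (cases "I = 0 \<or> I = \<infinity>")
  case True
  then show ?thesis
    using zero by (intro exI[of _ 1]) (auto simp: ennreal_mult_top)
next
  case False
  then obtain r where I: "I = ennreal r" "r > 0"
    by (cases I) (auto simp: zero_less_iff_neq_zero)
  define c where "c = enn2real B / r + 1"
  have "c > 0"
    using I by (simp add: c_def add_nonneg_pos)
  moreover have "B \<le> ennreal c * I"
  proof -
    have "enn2real B \<le> c * r"
      using I by (simp add: c_def field_simps)
    then have "ennreal (enn2real B) \<le> ennreal (c * r)"
      by (rule ennreal_leI)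
    then show ?thesis
      using \<open>B < \<infinity>\<close> I \<open>c > 0\<close> by (simp add: ennreal_mult less_top)
  qed
  ultimately show ?thesis
    using bounded by (intro exI[of _ c]) (auto intro: order_trans)
qed

lemma prod_indicator:
  "finite A \<Longrightarrow> (\<Prod>k\<in>A. indicator (S k) (x k) :: 'a::comm_semiring_1) = of_bool (\<forall>k\<in>A. x k \<in> S k)"
  by (induction A rule: finite_induct) (auto simp: indicator_def)

lemma two_powr_minus: "(2::real) powr (- real n) = 1 / 2^n"
  by (simp add: powr_minus powr_realpow divide_inverse)

lemma rescaled_mem_interval:
  "(2::real)^n * x - c \<in> {a..b} \<longleftrightarrow> x \<in> {(c + a) / 2^n..(c + b) / 2^n}"
  by (auto simp: field_simps)

lemma lborel_integral_translate:
  fixes g :: "'a::euclidean_space \<Rightarrow> real"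
  assumes [measurable]: "g \<in> borel_measurable borel"
  shows "(\<integral>t. g t \<partial>lborel) = (\<integral>t. g (t + h) \<partial>lborel)"
proof -
  have "(\<integral>t. g t \<partial>lborel) = (\<integral>t. g t \<partial>distr lborel borel ((+) h))"
    by (simp add: lborel_distr_plus)
  also have "\<dots> = (\<integral>t. g (h + t) \<partial>lborel)"
    by (rule integral_distr) auto
  finally show ?thesis by (simp add: add.commute)
qed

lemma integral_indicator_approx:
  fixes g :: "'a::euclidean_space \<Rightarrow> real"
  assumes S: "compact S" "continuous_on S g" and bound: "\<And>t. t \<in> S \<Longrightarrow> \<bar>g t - v\<bar> \<le> B"
  shows "\<bar>(\<integral>t. indicator S t * g t \<partial>lborel) - measure lborel S * v\<bar> \<le> measure lborel S * B"
proof -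
  have g: "integrable lborel (\<lambda>t. indicator S t * g t)"
    using borel_integrable_compact[OF S] by simp
  have const: "integrable lborel (\<lambda>t. indicator S t * c)" for c :: real
    using borel_integrable_compact[OF S(1) continuous_on_const[of S c]] by simp
  have "emeasure lborel S < \<infinity>"
    using emeasure_bounded_finite[OF compact_imp_bounded[OF S(1)]] by (simp add: less_top)
  then have const_integral: "(\<integral>t. indicator S t * c \<partial>lborel) = measure lborel S * c" for c :: real
    using compact_imp_closed[OF S(1)] by (simp add: integral_indicator less_top[symmetric])
  have "(\<integral>t. indicator S t * (v - B) \<partial>lborel) \<le> (\<integral>t. indicator S t * g t \<partial>lborel)"
    using bound by (intro integral_mono[OF const g]) (force simp: indicator_def abs_le_iff)
  moreover have "(\<integral>t. indicator S t * g t \<partial>lborel) \<le> (\<integral>t. indicator S t * (v + B) \<partial>lborel)"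
    using bound by (intro integral_mono[OF g const]) (force simp: indicator_def abs_le_iff)
  ultimately show ?thesis
    unfolding const_integral by (simp add: abs_le_iff algebra_simps)
qed

lemma nn_integral_indicator_approx:
  fixes \<phi> :: "'a \<Rightarrow> real"
  assumes [measurable]: "A \<in> sets M" "\<phi> \<in> borel_measurable M"
    and A: "emeasure M A = ennreal m" "0 \<le> m"
    and nonneg: "\<And>t. 0 \<le> \<phi> t" "0 \<le> L" "0 \<le> \<epsilon>"
    and close: "\<And>t. t \<in> A \<Longrightarrow> \<bar>\<phi> t - L\<bar> \<le> \<epsilon>"
  shows "(\<integral>\<^sup>+t. ennreal (\<phi> t) * indicator A t \<partial>M) \<le> ennreal (m * L) + ennreal (m * \<epsilon>)"
    and "ennreal (m * L) \<le> (\<integral>\<^sup>+t. ennreal (\<phi> t) * indicator A t \<partial>M) + ennreal (m * \<epsilon>)"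
proof -
  have const_integral: "(\<integral>\<^sup>+t. ennreal c * indicator A t \<partial>M) = ennreal (m * c)" if "0 \<le> c" for c
    using that A by (simp add: nn_integral_cmult_indicator ennreal_mult mult.commute)
  have close': "\<phi> t \<le> L + \<epsilon>" "L \<le> \<phi> t + \<epsilon>" if "t \<in> A" for t
    using close[OF that] by (simp_all add: abs_le_iff)
  have "(\<integral>\<^sup>+t. ennreal (\<phi> t) * indicator A t \<partial>M) \<le> (\<integral>\<^sup>+t. ennreal (L + \<epsilon>) * indicator A t \<partial>M)"
    using close' by (intro nn_integral_mono) (auto simp: indicator_def intro!: ennreal_leI)
  also have "\<dots> = ennreal (m * (L + \<epsilon>))"
    using nonneg by (intro const_integral) simp
  finally show "(\<integral>\<^sup>+t. ennreal (\<phi> t) * indicator A t \<partial>M) \<le> ennreal (m * L) + ennreal (m * \<epsilon>)"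
    using nonneg A by (simp add: distrib_left)
  have "ennreal (m * L) = (\<integral>\<^sup>+t. ennreal L * indicator A t \<partial>M)"
    using nonneg by (simp add: const_integral)
  also have "\<dots> \<le> (\<integral>\<^sup>+t. ennreal (\<phi> t) * indicator A t + ennreal \<epsilon> * indicator A t \<partial>M)"
    using close' nonneg
    by (intro nn_integral_mono) (auto simp: indicator_def ennreal_plus[symmetric] intro!: ennreal_leI simp del: ennreal_plus)
  also have "\<dots> = (\<integral>\<^sup>+t. ennreal (\<phi> t) * indicator A t \<partial>M) + ennreal (m * \<epsilon>)"
    using nonneg by (simp add: nn_integral_add const_integral)
  finally show "ennreal (m * L) \<le> (\<integral>\<^sup>+t. ennreal (\<phi> t) * indicator A t \<partial>M) + ennreal (m * \<epsilon>)" .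
qed

lemma ennreal_approx_trans:
  fixes a b d :: real and T :: ennreal
  assumes "0 \<le> a" "0 \<le> b" "0 \<le> d" and "\<bar>a - b\<bar> \<le> d"
    and "T \<le> ennreal b + ennreal d" "ennreal b \<le> T + ennreal d"
  shows "ennreal a \<le> T + ennreal (2 * d)" and "T \<le> ennreal a + ennreal (2 * d)"
proof -
  have twice: "ennreal (2 * d) = ennreal d + ennreal d"
    using \<open>0 \<le> d\<close> by (simp flip: ennreal_plus)
  have "ennreal a \<le> ennreal b + ennreal d"
    using assms(1-4) by (simp flip: ennreal_plus add: ennreal_leI abs_le_iff)
  also have "\<dots> \<le> T + ennreal (2 * d)"
    using assms(6) by (simp add: twice add.assoc[symmetric] add_right_mono)
  finally show "ennreal a \<le> T + ennreal (2 * d)" .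
  have "ennreal b \<le> ennreal a + ennreal d"
    using assms(1-4) by (simp flip: ennreal_plus add: ennreal_leI abs_le_iff)
  then have "T \<le> ennreal a + ennreal d + ennreal d"
    using assms(5) by (meson add_right_mono order_trans)
  then show "T \<le> ennreal a + ennreal (2 * d)"
    by (simp add: twice add.assoc)
qed

section \<open>Partial derivatives along coordinate lines\<close>

lemma unitvec_nth [simp]: "unitvec j $ i = (if i = j then 1 else 0)"
  by (simp add: unitvec_def axis_def)

lemma has_real_derivative_partial:
  assumes "\<And>x. has_partial j g x"
  shows "((\<lambda>t. g (x + t *\<^sub>R unitvec j)) has_real_derivative partial j g (x + t *\<^sub>R unitvec j)) (at t)"
proof -
  let ?y = "x + t *\<^sub>R unitvec j"
  have "((\<lambda>\<tau>. g (?y + \<tau> *\<^sub>R unitvec j)) has_real_derivative partial j g ?y) (at 0)"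
    using assms[of ?y] by (simp add: has_partial_def partial_def DERIV_deriv_iff_real_differentiable)
  moreover have "(\<lambda>\<tau>. g (?y + \<tau> *\<^sub>R unitvec j)) = (\<lambda>\<tau>. g (x + (\<tau> + t) *\<^sub>R unitvec j))"
    by (simp add: algebra_simps scaleR_add_left)
  ultimately show ?thesis
    using DERIV_shift[of "\<lambda>t. g (x + t *\<^sub>R unitvec j)" "partial j g ?y" 0 t] by simp
qed

lemma partial_line_bound:
  assumes "\<And>x. has_partial j g x"
    and "\<And>\<xi>. \<xi> \<in> closed_segment 0 a \<Longrightarrow> \<bar>partial j g (x + \<xi> *\<^sub>R unitvec j) - c\<bar> \<le> B"
  shows "\<bar>g (x + a *\<^sub>R unitvec j) - g x - a * c\<bar> \<le> B * \<bar>a\<bar>"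
proof -
  let ?h = "\<lambda>\<tau>. g (x + \<tau> *\<^sub>R unitvec j) - \<tau> * c"
  have "norm (?h a - ?h 0) \<le> B * norm (a - 0)"
  proof (rule field_differentiable_bound[OF convex_closed_segment])
    fix \<tau> :: real
    have "(?h has_real_derivative partial j g (x + \<tau> *\<^sub>R unitvec j) - 1 * c) (at \<tau>)"
      by (intro DERIV_diff has_real_derivative_partial[OF assms(1)] DERIV_cmult_right DERIV_ident)
    then show "(?h has_field_derivative partial j g (x + \<tau> *\<^sub>R unitvec j) - c) (at \<tau> within closed_segment 0 a)"
      by (simp add: has_field_derivative_at_within)
  next
    fix \<tau> assume "\<tau> \<in> closed_segment 0 a"
    then show "norm (partial j g (x + \<tau> *\<^sub>R unitvec j) - c) \<le> B"
      using assms(2) by simp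
  qed simp_all
  then show ?thesis by simp
qed

lemma lipschitz_on_box_by_partials:
  fixes g :: "real^'n::finite \<Rightarrow> real"
  assumes partials: "\<And>j x. has_partial j g x"
    and bound: "\<And>j x. x \<in> cbox l u \<Longrightarrow> \<bar>partial j g x\<bar> \<le> B"
    and y: "y \<in> cbox l u" and z: "z \<in> cbox l u"
  shows "\<bar>g y - g z\<bar> \<le> B * (\<Sum>j\<in>UNIV. \<bar>y$j - z$j\<bar>)"
proof -
  \<comment> \<open>Walk from z to y changing one coordinate at a time.\<close>
  define w where "w S = (\<chi> i. if i \<in> S then y$i else z$i)" for S
  have yz: "l$i \<le> y$i" "y$i \<le> u$i" "l$i \<le> z$i" "z$i \<le> u$i" for i
    using y z by (auto simp: mem_box_cart)
  have "\<bar>g (w S) - g z\<bar> \<le> B * (\<Sum>j\<in>S. \<bar>y$j - z$j\<bar>)" for S :: "'n set"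
  proof (induction S rule: finite_induct[OF finite])
    case 1
    then show ?case by (simp add: w_def)
  next
    case (2 j S)
    have step: "w (insert j S) = w S + (y$j - z$j) *\<^sub>R unitvec j"
      using "2.hyps" by (auto simp: w_def vec_eq_iff)
    have "\<bar>g (w S + (y$j - z$j) *\<^sub>R unitvec j) - g (w S) - (y$j - z$j) * 0\<bar> \<le> B * \<bar>y$j - z$j\<bar>"
    proof (rule partial_line_bound[OF partials])
      fix \<xi> assume "\<xi> \<in> closed_segment 0 (y$j - z$j)"
      then have "min 0 (y$j - z$j) \<le> \<xi>" "\<xi> \<le> max 0 (y$j - z$j)"
        by (auto simp: closed_segment_eq_real_ivl split: if_splits)
      then have "w S + \<xi> *\<^sub>R unitvec j \<in> cbox l u"
        using yz[of j] "2.hyps" unfolding mem_box_cart by (auto simp: w_def min_def max_def intro: yz split: if_splits)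
      then show "\<bar>partial j g (w S + \<xi> *\<^sub>R unitvec j) - 0\<bar> \<le> B"
        using bound by simp
    qed
    then show ?case
      using "2.IH" "2.hyps" step by (simp add: distrib_left)
  qed
  from this[of UNIV] show ?thesis by (simp add: w_def)
qed

lemma C2D:
  assumes "C2 f"
  shows "continuous_on UNIV f" "has_partial j f x" "continuous_on UNIV (partial j f)"
    "has_partial j (partial k f) x" "continuous_on UNIV (partial j (partial k f))"
  using assms by (auto simp: C2_def)

lemma continuous_on_grad: "C2 f \<Longrightarrow> continuous_on UNIV (grad f)"
  unfolding grad_def[abs_def] by (intro continuous_on_vec_lambda C2D)

lemma borel_measurable_norm_grad [measurable]:
  "C2 f \<Longrightarrow> (\<lambda>t. norm (grad f t)) \<in> borel_measurable borel"
  by (intro borel_measurable_continuous_onI continuous_on_norm continuous_on_grad)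

lemma continuous_on_hessF: "C2 f \<Longrightarrow> continuous_on UNIV (hessF f)"
  unfolding hessF_def[abs_def] by (intro continuous_intros C2D)

lemma hessF_nonneg: "hessF f x \<ge> 0"
  by (simp add: hessF_def sum_nonneg)

lemma abs_partial_partial_le_hessF: "\<bar>partial j (partial k f) x\<bar> \<le> hessF f x"
proof -
  have "(partial j (partial k f) x)\<^sup>2 \<le> (\<Sum>k\<in>UNIV. (partial j (partial k f) x)\<^sup>2)"
    by (rule member_le_sum) auto
  also have "\<dots> \<le> (\<Sum>j\<in>UNIV. \<Sum>k\<in>UNIV. (partial j (partial k f) x)\<^sup>2)"
    by (rule member_le_sum[where f = "\<lambda>j. \<Sum>k\<in>UNIV. (partial j (partial k f) x)\<^sup>2"])
       (auto intro: sum_nonneg)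
  finally show ?thesis
    unfolding hessF_def by (metis real_sqrt_abs real_sqrt_le_mono)
qed

lemma hessF_eq_0_if_hess_int_eq_0:
  assumes f: "C2 f" and "hess_int f = 0"
  shows "hessF f x = 0"
proof -
  have cont: "continuous_on UNIV (hessF f)"
    by (rule continuous_on_hessF[OF f])
  then have [measurable]: "hessF f \<in> borel_measurable borel"
    by (rule borel_measurable_continuous_onI)
  have "AE x in lborel. ennreal (hessF f x) = 0"
    using \<open>hess_int f = 0\<close> unfolding hess_int_def by (simp add: nn_integral_0_iff_AE)
  then have "AE x in lebesgue. x \<in> {x. hessF f x = 0}"
    by (intro AE_completion) (auto elim!: eventually_mono simp: hessF_nonneg antisym)
  moreover have "closed {x. hessF f x = 0}"
    using cont by (intro closed_Collect_eq continuous_intros) auto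
  ultimately show ?thesis
    using mem_closed_if_AE_lebesgue by blast
qed

section \<open>Dyadic cubes\<close>

definition corner :: "nat \<Rightarrow> int^'n::finite \<Rightarrow> real^'n" where
  "corner n \<alpha> = (\<chi> k. real_of_int (\<alpha>$k) / 2^n)"

lemma cube_eq_cbox: "cube n \<alpha> = cbox (corner n \<alpha>) (corner n (\<alpha> + 1))"
proof -
  have unit: "{y::real^'n. \<forall>j. y $ j \<in> {-1/2..1/2}} = cbox (\<chi> j. -1/2) (\<chi> j. 1/2)"
    by (auto simp: mem_box_cart)
  have "cube n \<alpha> = (\<lambda>y. (1/2^n) *\<^sub>R y + xpt n \<alpha>) ` cbox (\<chi> j. -1/2) (\<chi> j. 1/2)"
    unfolding cube_def unit two_powr_minus by (simp add: add.commute)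
  also have "\<dots> = cbox (corner n \<alpha>) (corner n (\<alpha> + 1))"
  proof -
    have "0 \<in> cbox (\<chi> j. -1/2) (\<chi> j. 1/2 :: real^'n)"
      by (simp add: mem_box_cart)
    moreover have "(1/2^n) *\<^sub>R (\<chi> j. -1/2) + xpt n \<alpha> = corner n \<alpha>"
      "(1/2^n) *\<^sub>R (\<chi> j. 1/2) + xpt n \<alpha> = corner n (\<alpha> + 1)"
      by (simp_all add: vec_eq_iff xpt_def corner_def of_intvec_def two_powr_minus field_simps)
    ultimately show ?thesis
      unfolding image_affinity_cbox by auto
  qed
  finally show ?thesis .
qed

lemma corner_in_cube: "corner n \<alpha> \<in> cube n \<alpha>"
  by (simp add: cube_eq_cbox mem_box_cart corner_def divide_right_mono)

lemma compact_cube: "compact (cube n \<alpha>)"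
  by (simp add: cube_eq_cbox)

lemma cube_side:
  assumes "y \<in> cube n \<alpha>" "z \<in> cube n \<alpha>"
  shows "\<bar>y$k - z$k\<bar> \<le> 1/2^n"
  using assms by (auto simp: cube_eq_cbox mem_box_cart corner_def add_divide_distrib abs_le_iff
      dest!: spec[of _ k])

lemma mem_cube_iff_scaled:
  "x \<in> cube n \<alpha> \<longleftrightarrow> (\<forall>k. real_of_int (\<alpha>$k) \<le> 2^n * x$k \<and> 2^n * x$k \<le> real_of_int (\<alpha>$k) + 1)"
  by (simp add: cube_eq_cbox mem_box_cart corner_def pos_divide_le_eq pos_le_divide_eq mult.commute)

definition hess_max :: "(real^'n::finite \<Rightarrow> real) \<Rightarrow> nat \<Rightarrow> int^'n \<Rightarrow> real" where
  "hess_max f n \<alpha> = (SUP x\<in>cube n \<alpha>. hessF f x)"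

lemma hess_max_attained:
  assumes "C2 f"
  obtains x where "x \<in> cube n \<alpha>" "hess_max f n \<alpha> = hessF f x"
    "\<And>y. y \<in> cube n \<alpha> \<Longrightarrow> hessF f y \<le> hessF f x"
proof -
  obtain x where x: "x \<in> cube n \<alpha>" and max: "\<forall>y\<in>cube n \<alpha>. hessF f y \<le> hessF f x"
    using continuous_attains_sup[OF compact_cube _ continuous_on_subset[OF continuous_on_hessF[OF assms]]]
      corner_in_cube by blast
  then have "hess_max f n \<alpha> = hessF f x"
    unfolding hess_max_def by (intro cSup_eq_maximum) auto
  with x max that show ?thesis by blast
qed

lemma hessF_le_hess_max: "C2 f \<Longrightarrow> x \<in> cube n \<alpha> \<Longrightarrow> hessF f x \<le> hess_max f n \<alpha>"
  by (metis hess_max_attained)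

lemma hess_max_nonneg: "C2 f \<Longrightarrow> hess_max f n \<alpha> \<ge> 0"
  using hessF_le_hess_max[OF _ corner_in_cube] hessF_nonneg by (meson order_trans)

lemma hess_max_mono:
  "C2 f \<Longrightarrow> cube n \<alpha> \<subseteq> cube m \<beta> \<Longrightarrow> hess_max f n \<alpha> \<le> hess_max f m \<beta>"
  by (metis hess_max_attained hessF_le_hess_max subsetD)

lemma H_eq_infsum_hess_max:
  "H n f = (\<Sum>\<^sub>\<infinity>\<alpha>. ennreal ((1/2^n)^CARD('n) * hess_max f n (\<alpha>::int^'n::finite)))"
proof -
  have "(2::real) powr (- real n * real CARD('n)) = (1/2^n)^CARD('n)"
  proof -
    have "(2::real) powr (- real n * real CARD('n)) = (2 powr (- real n)) powr real CARD('n)"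
      by (simp add: powr_powr)
    then show ?thesis by (simp add: two_powr_minus powr_realpow)
  qed
  then show ?thesis by (simp add: H_def hess_max_def)
qed

lemma H_eq_0_if_hess_int_eq_0:
  assumes "C2 f" "hess_int f = 0"
  shows "H n f = 0"
proof -
  have zero: "hessF f = (\<lambda>x. 0)"
    using hessF_eq_0_if_hess_int_eq_0[OF assms] by blast
  have "hess_max f n \<alpha> = 0" for \<alpha>
    unfolding hess_max_def zero using corner_in_cube by (intro cSUP_const) auto
  then show ?thesis
    by (simp add: H_eq_infsum_hess_max)
qed

lemma partial_lipschitz_on_cube:
  fixes f :: "real^'n::finite \<Rightarrow> real"
  assumes f: "C2 f" and y: "y \<in> cube n \<alpha>" and z: "z \<in> cube n \<alpha>"
  shows "\<bar>partial k f y - partial k f z\<bar> \<le> real CARD('n) / 2^n * hess_max f n \<alpha>"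
proof -
  have "\<bar>partial k f y - partial k f z\<bar> \<le> hess_max f n \<alpha> * (\<Sum>j\<in>UNIV. \<bar>y$j - z$j\<bar>)"
    using y z unfolding cube_eq_cbox
  proof (rule lipschitz_on_box_by_partials[rotated 2])
    show "\<bar>partial j (partial k f) x\<bar> \<le> hess_max f n \<alpha>" if "x \<in> cbox (corner n \<alpha>) (corner n (\<alpha> + 1))" for j x
      using abs_partial_partial_le_hessF hessF_le_hess_max[OF f] that unfolding cube_eq_cbox
      by (meson order_trans)
  qed (rule C2D[OF f])
  also have "\<dots> \<le> hess_max f n \<alpha> * (\<Sum>j\<in>(UNIV::'n set). 1/2^n)"
    using cube_side[OF y z] by (intro mult_left_mono sum_mono hess_max_nonneg[OF f])
  finally show ?thesis by (simp add: ac_simps)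
qed

lemma grad_lipschitz_on_cube:
  fixes f :: "real^'n::finite \<Rightarrow> real"
  assumes "C2 f" "y \<in> cube n \<alpha>" "z \<in> cube n \<alpha>"
  shows "norm (grad f y - grad f z) \<le> real CARD('n)^2 / 2^n * hess_max f n \<alpha>"
proof -
  have "norm (grad f y - grad f z) \<le> (\<Sum>k\<in>UNIV. \<bar>partial k f y - partial k f z\<bar>)"
    using norm_le_l1_cart[of "grad f y - grad f z"] by (simp add: grad_def)
  also have "\<dots> \<le> (\<Sum>k\<in>(UNIV::'n set). real CARD('n) / 2^n * hess_max f n \<alpha>)"
    by (intro sum_mono partial_lipschitz_on_cube assms)
  finally show ?thesis by (simp add: power2_eq_square)
qed

section \<open>Haar coefficients as difference quotients\<close>

definition half_step :: "nat \<Rightarrow> 'n::finite \<Rightarrow> real^'n" where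
  "half_step n j = (1/2^Suc n) *\<^sub>R unitvec j"

definition lower_half :: "nat \<Rightarrow> int^'n::finite \<Rightarrow> 'n \<Rightarrow> (real^'n) set" where
  "lower_half n \<alpha> j = cbox (corner n \<alpha>) (corner n (\<alpha> + 1) - half_step n j)"

definition upper_half :: "nat \<Rightarrow> int^'n::finite \<Rightarrow> 'n \<Rightarrow> (real^'n) set" where
  "upper_half n \<alpha> j = cbox (corner n \<alpha> + half_step n j) (corner n (\<alpha> + 1))"

lemma psi_eps: "psi (eps j) u = psi1 (u$j) * of_bool (\<forall>k\<in>-{j}. u$k \<in> {0..1})"
proof -
  have "psi (eps j) u = psi1 (u$j) * (\<Prod>k\<in>-{j}. (if eps j k then psi1 else psi0) (u$k))"
    unfolding psi_def by (subst prod.remove[of UNIV j]) (auto simp: eps_def Compl_eq_Diff_UNIV)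
  also have "(\<Prod>k\<in>-{j}. (if eps j k then psi1 else psi0) (u$k)) = (\<Prod>k\<in>-{j}. indicator {0..1} (u$k))"
    by (intro prod.cong) (auto simp: eps_def psi0_def)
  finally show ?thesis by (simp add: prod_indicator)
qed

lemma lower_half_cart:
  \<comment> \<open>The \<open>+ 0\<close> gives both bounds the shape needed by \<open>psi_eps_rescaled\<close>.\<close>
  "lower_half n \<alpha> j = {t. \<forall>k. t$k \<in> {(real_of_int (\<alpha>$k) + 0) / 2^n..(real_of_int (\<alpha>$k) + (if k = j then 1/2 else 1)) / 2^n}}"
proof -
  have "corner n (\<alpha> + 1) - half_step n j = (\<chi> k. (real_of_int (\<alpha>$k) + (if k = j then 1/2 else 1)) / 2^n)"
    by (simp add: vec_eq_iff corner_def half_step_def diff_divide_distrib add_divide_distrib)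
  then show ?thesis
    unfolding lower_half_def by (simp add: set_eq_iff mem_box_cart corner_def)
qed

lemma upper_half_cart:
  "upper_half n \<alpha> j = {t. \<forall>k. t$k \<in> {(real_of_int (\<alpha>$k) + (if k = j then 1/2 else 0)) / 2^n..(real_of_int (\<alpha>$k) + 1) / 2^n}}"
proof -
  have "corner n \<alpha> + half_step n j = (\<chi> k. (real_of_int (\<alpha>$k) + (if k = j then 1/2 else 0)) / 2^n)"
    by (simp add: vec_eq_iff corner_def half_step_def add_divide_distrib)
  then show ?thesis
    unfolding upper_half_def by (simp add: set_eq_iff mem_box_cart corner_def)
qed

lemma psi_eps_rescaled:
  fixes t :: "real^'n::finite"
  shows "psi (eps j) ((2::real)^n *\<^sub>R t - of_intvec \<alpha>) = indicator (lower_half n \<alpha> j) t - indicator (upper_half n \<alpha> j) t"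
proof -
  let ?u = "(2::real)^n *\<^sub>R t - of_intvec \<alpha>"
  have u: "t$k \<in> {(real_of_int (\<alpha>$k) + a) / 2^n..(real_of_int (\<alpha>$k) + b) / 2^n} \<longleftrightarrow> ?u$k \<in> {a..b}" for k a b
    using rescaled_mem_interval by (simp add: of_intvec_def)
  have split: "(\<forall>k. P k) \<longleftrightarrow> P j \<and> (\<forall>k\<in>-{j}. P k)" for P :: "'n \<Rightarrow> bool"
    by auto
  have "t \<in> lower_half n \<alpha> j \<longleftrightarrow> ?u$j \<in> {0..1/2} \<and> (\<forall>k\<in>-{j}. ?u$k \<in> {0..1})"
    unfolding lower_half_cart mem_Collect_eq u by (subst split) simp
  moreover have "t \<in> upper_half n \<alpha> j \<longleftrightarrow> ?u$j \<in> {1/2..1} \<and> (\<forall>k\<in>-{j}. ?u$k \<in> {0..1})"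
    unfolding upper_half_cart mem_Collect_eq u by (subst split) simp
  ultimately show ?thesis
    unfolding psi_eps psi1_def by (simp add: indicator_def)
qed

lemma upper_half_translate: "t + half_step n j \<in> upper_half n \<alpha> j \<longleftrightarrow> t \<in> lower_half n \<alpha> j"
  by (simp add: lower_half_def upper_half_def mem_box_cart le_diff_eq)

lemma lower_half_shift_in_cube:
  assumes t: "t \<in> lower_half n \<alpha> j" and "0 \<le> \<xi>" "\<xi> \<le> 1/2^Suc n"
  shows "t + \<xi> *\<^sub>R unitvec j \<in> cube n \<alpha>"
proof -
  have "(real_of_int (\<alpha>$j) + 1/2) / 2^n + 1/2^Suc n = (real_of_int (\<alpha>$j) + 1) / 2^n"
    by (simp add: field_simps)
  moreover have "(real_of_int (\<alpha>$k) + 1/2) / 2^n \<le> (real_of_int (\<alpha>$k) + 1) / 2^n" for k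
    by (simp add: divide_right_mono)
  moreover have "real_of_int (\<alpha>$k) / 2^n \<le> t$k \<and> t$k \<le> (real_of_int (\<alpha>$k) + (if k = j then 1/2 else 1)) / 2^n" for k
    using t by (simp add: lower_half_cart)
  ultimately show ?thesis
    using assms(2,3) unfolding cube_eq_cbox mem_box_cart corner_def
    by (auto simp: algebra_simps) (smt (verit))+
qed

lemma measure_lower_half: "measure lborel (lower_half n \<alpha> (j::'n::finite)) = (1/2^n)^CARD('n) / 2"
proof -
  have "corner n \<alpha> \<in> lower_half n \<alpha> j"
    using lower_half_shift_in_cube by (simp add: lower_half_cart corner_def divide_right_mono)
  then have "measure lborel (lower_half n \<alpha> j) = (\<Prod>k\<in>UNIV. (corner n (\<alpha> + 1) - half_step n j) $ k - corner n \<alpha> $ k)"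
    unfolding lower_half_def by (intro content_cbox_cart) auto
  also have "\<dots> = (\<Prod>k\<in>UNIV. (1/2^n) * (if k = j then 1/2 else 1))"
    by (intro prod.cong) (auto simp: corner_def half_step_def field_simps)
  also have "\<dots> = (1/2^n)^CARD('n) / 2"
    unfolding prod.distrib by (simp add: prod.delta)
  finally show ?thesis .
qed

lemma dhat_eq_integral_difference:
  fixes f :: "real^'n::finite \<Rightarrow> real"
  assumes f: "continuous_on UNIV f"
  shows "dhat n \<alpha> f $ j = 4 * 2^n * (\<integral>t. indicator (lower_half n \<alpha> j) t * (f (t + half_step n j) - f t) \<partial>lborel)"
proof -
  let ?A = "lower_half n \<alpha> j" and ?B = "upper_half n \<alpha> j" and ?h = "half_step n j"
  have [measurable]: "f \<in> borel_measurable borel"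
    using f by (rule borel_measurable_continuous_onI)
  have integrable: "integrable lborel (\<lambda>t. indicator S t * g t)"
    if "compact S" "continuous_on UNIV g" for S and g :: "real^'n \<Rightarrow> real"
    using borel_integrable_compact[OF that(1) continuous_on_subset[OF that(2)]] by simp
  have f_shift: "continuous_on UNIV (\<lambda>t. f (t + ?h))"
    by (intro continuous_on_compose2[OF f] continuous_intros) auto
  have "(\<integral>t. indicator ?B t * f t \<partial>lborel) = (\<integral>t. indicator ?B (t + ?h) * f (t + ?h) \<partial>lborel)"
    by (rule lborel_integral_translate) (simp add: upper_half_def)
  also have "\<dots> = (\<integral>t. indicator ?A t * f (t + ?h) \<partial>lborel)"
    by (simp add: indicator_def upper_half_translate)
  finally have "(\<integral>t. f t * psi (eps j) ((2::real)^n *\<^sub>R t - of_intvec \<alpha>) \<partial>lborel)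
      = (\<integral>t. indicator ?A t * f t \<partial>lborel) - (\<integral>t. indicator ?A t * f (t + ?h) \<partial>lborel)"
    using integrable[OF _ f, of ?A] integrable[OF _ f, of ?B]
    by (simp add: psi_eps_rescaled algebra_simps lower_half_def upper_half_def)
  also have "\<dots> = - (\<integral>t. indicator ?A t * (f (t + ?h) - f t) \<partial>lborel)"
    using integrable[OF _ f, of ?A] integrable[OF _ f_shift, of ?A]
    by (simp add: right_diff_distrib lower_half_def)
  finally have integral: "(\<integral>t. f t * psi (eps j) ((2::real)^n *\<^sub>R t - of_intvec \<alpha>) \<partial>lborel)
      = - (\<integral>t. indicator ?A t * (f (t + ?h) - f t) \<partial>lborel)" .
  have "(2::real) powr (real n * (1 - real CARD('n) / 2) + 2) * 2 powr (real n * real CARD('n) / 2)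
      = 2 powr real (n + 2)"
    by (simp add: powr_add[symmetric] algebra_simps)
  also have "\<dots> = 4 * 2^n"
    by (subst powr_realpow) (simp_all add: power_add)
  finally show ?thesis
    by (simp add: dhat_def dcoef_def integral)
qed

lemma dhat_approx_partial:
  fixes f :: "real^'n::finite \<Rightarrow> real"
  assumes f: "C2 f"
  shows "\<bar>dhat n \<alpha> f $ j - (1/2^n)^CARD('n) * partial j f (corner n \<alpha>)\<bar>
          \<le> real CARD('n) * (1/2^n)^Suc CARD('n) * hess_max f n \<alpha>"
proof -
  define a :: real where "a = 1/2^Suc n"
  define B where "B = real CARD('n) / 2^n * hess_max f n \<alpha>"
  define m where "m = measure lborel (lower_half n \<alpha> j)"
  have "\<bar>(f (t + half_step n j) - f t) - a * partial j f (corner n \<alpha>)\<bar> \<le> B * a"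
    if t: "t \<in> lower_half n \<alpha> j" for t
  proof -
    have "\<bar>f (t + a *\<^sub>R unitvec j) - f t - a * partial j f (corner n \<alpha>)\<bar> \<le> B * \<bar>a\<bar>"
    proof (rule partial_line_bound[OF C2D(2)[OF f]])
      fix \<xi> assume "\<xi> \<in> closed_segment 0 a"
      then have "t + \<xi> *\<^sub>R unitvec j \<in> cube n \<alpha>"
        by (intro lower_half_shift_in_cube[OF t]) (auto simp: closed_segment_eq_real_ivl a_def)
      then show "\<bar>partial j f (t + \<xi> *\<^sub>R unitvec j) - partial j f (corner n \<alpha>)\<bar> \<le> B"
        unfolding B_def by (intro partial_lipschitz_on_cube[OF f] corner_in_cube)
    qed
    then show ?thesis
      by (simp add: half_step_def a_def)
  qed
  then have "\<bar>(\<integral>t. indicator (lower_half n \<alpha> j) t * (f (t + half_step n j) - f t) \<partial>lborel)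
      - m * (a * partial j f (corner n \<alpha>))\<bar> \<le> m * (B * a)"
    unfolding m_def using C2D(1)[OF f]
    by (intro integral_indicator_approx)
       (auto simp: lower_half_def intro!: continuous_intros continuous_on_compose2[of UNIV f])
  then have "4 * 2^n * \<bar>dhat n \<alpha> f $ j / (4 * 2^n) - m * (a * partial j f (corner n \<alpha>))\<bar>
      \<le> 4 * 2^n * (m * (B * a))"
    by (simp add: dhat_eq_integral_difference[OF C2D(1)[OF f]])
  moreover have "m = (1/2^n)^CARD('n) / 2"
    by (simp add: m_def measure_lower_half)
  ultimately show ?thesis
    by (simp add: a_def B_def field_simps abs_mult[symmetric])
qed

lemma norm_dhat_approx:
  fixes f :: "real^'n::finite \<Rightarrow> real"
  assumes "C2 f"
  shows "\<bar>norm (dhat n \<alpha> f) - (1/2^n)^CARD('n) * norm (grad f (corner n \<alpha>))\<bar>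
          \<le> real CARD('n)^2 * (1/2^n)^Suc CARD('n) * hess_max f n \<alpha>"
proof -
  let ?v = "dhat n \<alpha> f - (1/2^n)^CARD('n) *\<^sub>R grad f (corner n \<alpha>)"
  have "\<bar>norm (dhat n \<alpha> f) - norm ((1/2^n)^CARD('n) *\<^sub>R grad f (corner n \<alpha>))\<bar> \<le> norm ?v"
    by (rule norm_triangle_ineq3)
  also have "\<dots> \<le> (\<Sum>j\<in>UNIV. \<bar>?v $ j\<bar>)"
    by (rule norm_le_l1_cart)
  also have "\<dots> \<le> (\<Sum>j\<in>(UNIV::'n set). real CARD('n) * (1/2^n)^Suc CARD('n) * hess_max f n \<alpha>)"
    using dhat_approx_partial[OF assms] by (intro sum_mono) (simp add: grad_def)
  finally show ?thesis
    by (simp add: power2_eq_square mult_ac)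
qed

section \<open>Tiling by half-open cells\<close>

definition cell :: "nat \<Rightarrow> int^'n::finite \<Rightarrow> (real^'n) set" where
  "cell n \<alpha> = {t. \<forall>k. corner n \<alpha> $ k \<le> t$k \<and> t$k < corner n (\<alpha> + 1) $ k}"

lemma mem_cell_iff: "t \<in> cell n \<alpha> \<longleftrightarrow> \<alpha> = (\<chi> k. \<lfloor>2^n * t$k\<rfloor>)"
proof -
  have "corner n \<alpha> $ k \<le> t$k \<and> t$k < corner n (\<alpha> + 1) $ k \<longleftrightarrow> \<alpha>$k = \<lfloor>2^n * t$k\<rfloor>" for k
    by (simp add: corner_def floor_eq_iff field_simps eq_commute[of "\<alpha>$k"])
  then show ?thesis
    by (simp add: cell_def vec_eq_iff)
qed

lemma cell_subset_cube: "cell n \<alpha> \<subseteq> cube n \<alpha>"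
  by (auto simp: cell_def cube_eq_cbox mem_box_cart less_imp_le)

lemma cell_borel [measurable]: "cell n \<alpha> \<in> sets borel"
  unfolding cell_def by measurable

lemma emeasure_cell: "emeasure lborel (cell n (\<alpha>::int^'n::finite)) = ennreal ((1/2^n)^CARD('n))"
proof -
  let ?a = "corner n \<alpha>" and ?b = "corner n (\<alpha> + 1)"
  have le: "\<forall>i\<in>Basis. ?a \<bullet> i \<le> ?b \<bullet> i"
    by (auto simp: Basis_vec_def inner_axis corner_def divide_right_mono)
  have vol: "(\<Prod>i\<in>Basis. (?b - ?a) \<bullet> i) = (1/2^n)^CARD('n)"
  proof -
    have "(\<Prod>i\<in>Basis. (?b - ?a) \<bullet> i) = (\<Prod>i\<in>(Basis::(real^'n) set). 1/2^n)"
      by (intro prod.cong) (auto simp: Basis_vec_def inner_axis corner_def diff_divide_distrib[symmetric])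
    then show ?thesis by simp
  qed
  have "emeasure lborel (box ?a ?b) \<le> emeasure lborel (cell n \<alpha>)"
    by (intro emeasure_mono) (auto simp: cell_def mem_box_cart less_imp_le)
  moreover have "emeasure lborel (cell n \<alpha>) \<le> emeasure lborel (cbox ?a ?b)"
    using cell_subset_cube by (intro emeasure_mono) (auto simp: cube_eq_cbox)
  ultimately show ?thesis
    unfolding emeasure_lborel_box_eq emeasure_lborel_cbox_eq using le vol by (simp add: antisym)
qed

lemma infsum_indicator_cell:
  fixes G :: ennreal and t :: "real^'n::finite"
  shows "(\<Sum>\<^sub>\<infinity>\<alpha>. G * indicator (cell n \<alpha>) t) = G"
proof -
  let ?a = "(\<chi> k. \<lfloor>2^n * t$k\<rfloor>) :: int^'n"
  have "(\<Sum>\<^sub>\<infinity>\<alpha>. G * indicator (cell n \<alpha>) t) = (\<Sum>\<^sub>\<infinity>\<alpha>\<in>{?a}. G * indicator (cell n \<alpha>) t)"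
    by (intro infsum_cong_neutral) (auto simp: mem_cell_iff)
  then show ?thesis
    by (simp add: mem_cell_iff)
qed

lemma nn_integral_cell_decomp:
  fixes G :: "real^'n::finite \<Rightarrow> ennreal"
  assumes [measurable]: "G \<in> borel_measurable borel"
  shows "(\<integral>\<^sup>+t. G t \<partial>lborel) = (\<Sum>\<^sub>\<infinity>\<alpha>::int^'n. \<integral>\<^sup>+t. G t * indicator (cell n \<alpha>) t \<partial>lborel)"
  by (simp add: infsum_indicator_cell nn_integral_infsum[symmetric])

lemma nn_integral_norm_grad_cell_approx:
  fixes f :: "real^'n::finite \<Rightarrow> real" and n :: nat and \<alpha> :: "int^'n"
  assumes f: "C2 f"
  defines "T \<equiv> \<integral>\<^sup>+t. ennreal (norm (grad f t)) * indicator (cell n \<alpha>) t \<partial>lborel"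
    and "L \<equiv> (1/2^n)^CARD('n) * norm (grad f (corner n \<alpha>))"
    and "D \<equiv> real CARD('n)^2 * (1/2^n)^Suc CARD('n) * hess_max f n \<alpha>"
  shows "T \<le> ennreal L + ennreal D" and "ennreal L \<le> T + ennreal D"
proof -
  define \<epsilon> where "\<epsilon> = real CARD('n)^2 / 2^n * hess_max f n \<alpha>"
  have "\<bar>norm (grad f t) - norm (grad f (corner n \<alpha>))\<bar> \<le> \<epsilon>" if "t \<in> cell n \<alpha>" for t
    using norm_triangle_ineq3[of "grad f t" "grad f (corner n \<alpha>)"]
      grad_lipschitz_on_cube[OF f subsetD[OF cell_subset_cube that] corner_in_cube]
    by (simp add: \<epsilon>_def)
  moreover have "0 \<le> \<epsilon>"
    using hess_max_nonneg[OF f] by (simp add: \<epsilon>_def)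
  moreover have "D = (1/2^n)^CARD('n) * \<epsilon>"
    by (simp add: D_def \<epsilon>_def field_simps)
  ultimately show "T \<le> ennreal L + ennreal D" and "ennreal L \<le> T + ennreal D"
    using nn_integral_indicator_approx[of "cell n \<alpha>" lborel "\<lambda>t. norm (grad f t)" "(1/2^n)^CARD('n)"] f
    by (simp_all add: T_def L_def emeasure_cell)
qed

lemma cell_estimate:
  fixes f :: "real^'n::finite \<Rightarrow> real" and n :: nat and \<alpha> :: "int^'n"
  assumes f: "C2 f"
  defines "T \<equiv> \<integral>\<^sup>+t. ennreal (norm (grad f t)) * indicator (cell n \<alpha>) t \<partial>lborel"
    and "D \<equiv> real CARD('n)^2 * (1/2^n)^Suc CARD('n) * hess_max f n \<alpha>"
  shows "ennreal (norm (dhat n \<alpha> f)) \<le> T + ennreal (2 * D)"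
    and "T \<le> ennreal (norm (dhat n \<alpha> f)) + ennreal (2 * D)"
  using ennreal_approx_trans[OF _ _ _ norm_dhat_approx[OF f, of n \<alpha>, folded D_def]
      nn_integral_norm_grad_cell_approx[OF f, of n \<alpha>, folded T_def D_def]]
    hess_max_nonneg[OF f]
  by (simp_all add: D_def)

lemma TV_eq_infsum_cells:
  fixes f :: "real^'n::finite \<Rightarrow> real"
  assumes "C2 f"
  shows "TV f = (\<Sum>\<^sub>\<infinity>\<alpha>::int^'n. \<integral>\<^sup>+t. ennreal (norm (grad f t)) * indicator (cell n \<alpha>) t \<partial>lborel)"
  unfolding TV_def using assms by (intro nn_integral_cell_decomp) measurable

lemma dsum_TV_estimate:
  fixes f :: "real^'n::finite \<Rightarrow> real" and n :: nat
  assumes f: "C2 f"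
  defines "K \<equiv> ennreal (2 * real CARD('n)^2 / 2^n)"
  shows "dsum n f \<le> TV f + K * H n f" and "TV f \<le> dsum n f + K * H n f"
proof -
  define E where "E \<alpha> = 2 * (real CARD('n)^2 * (1/2^n)^Suc CARD('n) * hess_max f n \<alpha>)" for \<alpha> :: "int^'n"
  have "ennreal (E \<alpha>) = K * ennreal ((1/2^n)^CARD('n) * hess_max f n \<alpha>)" for \<alpha>
    using hess_max_nonneg[OF f] by (simp add: E_def K_def ennreal_mult[symmetric] field_simps)
  then have errors: "(\<Sum>\<^sub>\<infinity>\<alpha>. ennreal (E \<alpha>)) = K * H n f"
    unfolding H_eq_infsum_hess_max by (simp add: K_def infsum_cmult_right_ennreal)
  have "dsum n f \<le> (\<Sum>\<^sub>\<infinity>\<alpha>. (\<integral>\<^sup>+t. ennreal (norm (grad f t)) * indicator (cell n \<alpha>) t \<partial>lborel) + ennreal (E \<alpha>))"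
    unfolding dsum_def E_def by (intro infsum_mono cell_estimate(1)[OF f]) simp_all
  also have "\<dots> = TV f + K * H n f"
    by (simp add: infsum_add TV_eq_infsum_cells[OF f, of n] errors)
  finally show "dsum n f \<le> TV f + K * H n f" .
  have "TV f \<le> (\<Sum>\<^sub>\<infinity>\<alpha>. ennreal (norm (dhat n \<alpha> f)) + ennreal (E \<alpha>))"
    unfolding TV_eq_infsum_cells[OF f, of n] E_def by (intro infsum_mono cell_estimate(2)[OF f]) simp_all
  also have "\<dots> = dsum n f + K * H n f"
    by (simp add: infsum_add dsum_def errors)
  finally show "TV f \<le> dsum n f + K * H n f" .
qed

section \<open>Comparing H at different levels\<close>

definition cell_index :: "nat \<Rightarrow> real^'n::finite \<Rightarrow> int^'n" where
  "cell_index n t = (\<chi> k. \<lfloor>2^n * t$k\<rfloor>)"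

lemma measurable_cell_index [measurable]:
  "(cell_index n :: real^'n::finite \<Rightarrow> int^'n) \<in> measurable borel (count_space UNIV)"
proof -
  have "(cell_index n :: real^'n \<Rightarrow> int^'n) -` {\<alpha>} = cell n \<alpha>" for \<alpha>
    by (auto simp: mem_cell_iff cell_index_def)
  then show ?thesis
    by (simp add: measurable_count_space_eq2_countable)
qed

definition hess_step :: "(real^'n::finite \<Rightarrow> real) \<Rightarrow> nat \<Rightarrow> real^'n \<Rightarrow> ennreal" where
  "hess_step f n t = ennreal (hess_max f n (cell_index n t))"

lemma borel_measurable_hess_step [measurable]: "hess_step f n \<in> borel_measurable borel"
  unfolding hess_step_def[abs_def] by measurable

lemma nn_integral_hess_step_cell:
  fixes \<alpha> :: "int^'n::finite"
  shows "(\<integral>\<^sup>+t. hess_step f n t * indicator (cell n \<alpha>) t \<partial>lborel)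
     = ennreal (hess_max f n \<alpha>) * ennreal ((1/2^n)^CARD('n))"
proof -
  have "(\<integral>\<^sup>+t. hess_step f n t * indicator (cell n \<alpha>) t \<partial>lborel)
      = (\<integral>\<^sup>+t. ennreal (hess_max f n \<alpha>) * indicator (cell n \<alpha>) t \<partial>lborel)"
    by (intro nn_integral_cong) (auto simp: hess_step_def indicator_def mem_cell_iff cell_index_def)
  then show ?thesis
    by (simp add: nn_integral_cmult_indicator emeasure_cell)
qed

lemma H_eq_nn_integral_hess_step:
  fixes f :: "real^'n::finite \<Rightarrow> real"
  assumes "C2 f"
  shows "H n f = (\<integral>\<^sup>+t. hess_step f n t \<partial>lborel)"
proof -
  have "(\<integral>\<^sup>+t. hess_step f n t * indicator (cell n \<alpha>) t \<partial>lborel)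
      = ennreal ((1/2^n)^CARD('n) * hess_max f n \<alpha>)" for \<alpha>
    unfolding nn_integral_hess_step_cell using hess_max_nonneg[OF assms]
    by (simp add: ennreal_mult mult.commute)
  then show ?thesis
    unfolding H_eq_infsum_hess_max nn_integral_cell_decomp[OF borel_measurable_hess_step, of _ _ n]
    by simp
qed

lemma nested_cubes:
  fixes \<alpha> \<beta> :: "int^'n::finite"
  assumes "n \<le> m"
    and lower: "\<And>k. 2^(m-n) * \<alpha>$k \<le> \<beta>$k" and upper: "\<And>k. \<beta>$k + 1 \<le> 2^(m-n) * (\<alpha>$k + 1)"
  shows "cube m \<beta> \<subseteq> cube n \<alpha>" and "cell m \<beta> \<subseteq> cell n \<alpha>"
proof -
  have "(2::real)^m = 2^(m-n) * 2^n"
    using \<open>n \<le> m\<close> by (simp flip: power_add)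
  then have scale: "real_of_int (2^(m-n) * z) / 2^m = real_of_int z / 2^n" for z :: int
    by simp
  have "real_of_int (2^(m-n) * \<alpha>$k) / 2^m \<le> real_of_int (\<beta>$k) / 2^m"
    "real_of_int (\<beta>$k + 1) / 2^m \<le> real_of_int (2^(m-n) * (\<alpha>$k + 1)) / 2^m" for k
    using lower upper by (intro divide_right_mono; simp only: of_int_le_iff; simp)+
  then have "corner n \<alpha> $ k \<le> corner m \<beta> $ k" "corner m (\<beta> + 1) $ k \<le> corner n (\<alpha> + 1) $ k" for k
    unfolding scale by (simp_all add: corner_def)
  then show "cube m \<beta> \<subseteq> cube n \<alpha>" and "cell m \<beta> \<subseteq> cell n \<alpha>"
    unfolding cube_eq_cbox cell_def subset_iff mem_box_cart mem_Collect_eq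
    by (meson order_trans order_le_less_trans less_le_trans)+
qed

lemma floor_scale_nest:
  fixes x :: real
  assumes "m \<le> n"
  shows "2^(n-m) * \<lfloor>2^m * x\<rfloor> \<le> \<lfloor>2^n * x\<rfloor>" and "\<lfloor>2^n * x\<rfloor> + 1 \<le> 2^(n-m) * (\<lfloor>2^m * x\<rfloor> + 1)"
proof -
  have p: "(2::real)^n = 2^(n-m) * 2^m"
    using assms by (simp flip: power_add)
  have "real_of_int (2^(n-m) * \<lfloor>2^m * x\<rfloor>) \<le> 2^n * x"
    unfolding p by (simp add: mult.assoc)
  then show "2^(n-m) * \<lfloor>2^m * x\<rfloor> \<le> \<lfloor>2^n * x\<rfloor>"
    by (simp add: le_floor_iff)
  have "2^n * x < real_of_int (2^(n-m) * (\<lfloor>2^m * x\<rfloor> + 1))"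
    unfolding p by (simp add: mult.assoc)
  then have "\<lfloor>2^n * x\<rfloor> < 2^(n-m) * (\<lfloor>2^m * x\<rfloor> + 1)"
    by (simp only: floor_less_iff)
  then show "\<lfloor>2^n * x\<rfloor> + 1 \<le> 2^(n-m) * (\<lfloor>2^m * x\<rfloor> + 1)"
    by linarith
qed

lemma H_antimono:
  fixes f :: "real^'n::finite \<Rightarrow> real"
  assumes f: "C2 f" and "m \<le> n"
  shows "H n f \<le> H m f"
proof -
  have "hess_step f n t \<le> hess_step f m t" for t
  proof -
    have "cube n (cell_index n t) \<subseteq> cube m (cell_index m t :: int^'n)"
      by (rule nested_cubes(1)[OF \<open>m \<le> n\<close>]) (simp_all add: cell_index_def floor_scale_nest[OF \<open>m \<le> n\<close>])
    then show ?thesis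
      unfolding hess_step_def by (intro ennreal_leI hess_max_mono[OF f])
  qed
  then show ?thesis
    unfolding H_eq_nn_integral_hess_step[OF f] by (intro nn_integral_mono)
qed

lemma floor_clamp:
  fixes y :: real and a b :: int
  assumes "a < b" "real_of_int a \<le> y" "y \<le> real_of_int b"
  shows "a \<le> min \<lfloor>y\<rfloor> (b - 1)" "real_of_int (min \<lfloor>y\<rfloor> (b - 1)) \<le> y"
    "y \<le> real_of_int (min \<lfloor>y\<rfloor> (b - 1)) + 1"
proof -
  show "a \<le> min \<lfloor>y\<rfloor> (b - 1)"
    using assms by (simp add: le_floor_iff)
  have "min \<lfloor>y\<rfloor> (b - 1) \<le> \<lfloor>y\<rfloor>"
    by simp
  then show "real_of_int (min \<lfloor>y\<rfloor> (b - 1)) \<le> y"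
    by (meson of_int_floor_le of_int_le_iff order_trans)
  show "y \<le> real_of_int (min \<lfloor>y\<rfloor> (b - 1)) + 1"
    using assms(3) by (cases "\<lfloor>y\<rfloor> \<le> b - 1") (simp_all add: less_imp_le)
qed

lemma cube_point_in_subcube:
  fixes x :: "real^'n::finite"
  assumes "n \<le> m" and x: "x \<in> cube n \<alpha>"
  obtains \<beta> where "x \<in> cube m \<beta>" "cell m \<beta> \<subseteq> cell n \<alpha>"
proof -
  define d where "d = m - n"
  \<comment> \<open>The \<open>min\<close> matters only for x on the upper face of the level-n cube.\<close>
  define \<beta> :: "int^'n" where "\<beta> = (\<chi> k. min \<lfloor>2^m * x$k\<rfloor> (2^d * (\<alpha>$k + 1) - 1))"
  have "(2::real)^m = 2^d * 2^n"
    using \<open>n \<le> m\<close> by (simp add: d_def flip: power_add)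
  then have "real_of_int (2^d * \<alpha>$k) \<le> 2^m * x$k" "2^m * x$k \<le> real_of_int (2^d * (\<alpha>$k + 1))" for k
    using x unfolding mem_cube_iff_scaled by (auto simp: mult.assoc dest!: spec[of _ k])
  then have clamp: "2^d * \<alpha>$k \<le> \<beta>$k" "real_of_int (\<beta>$k) \<le> 2^m * x$k" "2^m * x$k \<le> real_of_int (\<beta>$k) + 1" for k
    using floor_clamp[of "2^d * \<alpha>$k" "2^d * (\<alpha>$k + 1)" "2^m * x$k"] by (simp_all add: \<beta>_def)
  have "x \<in> cube m \<beta>"
    using clamp(2,3) by (simp add: mem_cube_iff_scaled)
  moreover have "cell m \<beta> \<subseteq> cell n \<alpha>"
    using clamp(1) by (rule nested_cubes(2)[OF \<open>n \<le> m\<close>, folded d_def]) (simp add: \<beta>_def)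
  ultimately show ?thesis
    using that by blast
qed

lemma H_le_finer:
  fixes f :: "real^'n::finite \<Rightarrow> real"
  assumes f: "C2 f" and "n \<le> m"
  shows "H n f \<le> ennreal (2^((m-n) * CARD('n))) * H m f"
proof -
  define c :: real where "c = 2^((m-n) * CARD('n))"
  have "(2::real)^m = 2^(m-n) * 2^n"
    using \<open>n \<le> m\<close> by (simp flip: power_add)
  then have scale: "(1/2^n)^CARD('n) = c * (1/2^m :: real)^CARD('n)"
    by (simp add: c_def power_mult power_mult_distrib[symmetric])
  have per_cube: "ennreal ((1/2^n)^CARD('n) * hess_max f n \<alpha>)
      \<le> ennreal c * (\<integral>\<^sup>+t. hess_step f m t * indicator (cell n \<alpha>) t \<partial>lborel)" for \<alpha>
  proof -
    obtain x where x: "x \<in> cube n \<alpha>" and max: "hess_max f n \<alpha> = hessF f x"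
      using hess_max_attained[OF f] by metis
    obtain \<beta> where x': "x \<in> cube m \<beta>" and sub: "cell m \<beta> \<subseteq> cell n \<alpha>"
      using cube_point_in_subcube[OF \<open>n \<le> m\<close> x] by blast
    have "hess_max f n \<alpha> \<le> hess_max f m \<beta>"
      using hessF_le_hess_max[OF f x'] max by simp
    then have "ennreal ((1/2^n)^CARD('n) * hess_max f n \<alpha>) \<le> ennreal c * ennreal (hess_max f m \<beta> * (1/2^m)^CARD('n))"
      using hess_max_nonneg[OF f] unfolding scale
      by (simp add: c_def ennreal_mult[symmetric] mult_ac mult_left_mono)
    also have "\<dots> = ennreal c * (\<integral>\<^sup>+t. hess_step f m t * indicator (cell m \<beta>) t \<partial>lborel)"
      by (simp add: nn_integral_hess_step_cell ennreal_mult'')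
    also have "\<dots> \<le> ennreal c * (\<integral>\<^sup>+t. hess_step f m t * indicator (cell n \<alpha>) t \<partial>lborel)"
      using sub by (intro mult_left_mono nn_integral_mono) (auto simp: indicator_def)
    finally show ?thesis .
  qed
  have "H n f \<le> (\<Sum>\<^sub>\<infinity>\<alpha>::int^'n. ennreal c * (\<integral>\<^sup>+t. hess_step f m t * indicator (cell n \<alpha>) t \<partial>lborel))"
    unfolding H_eq_infsum_hess_max by (intro infsum_mono per_cube) simp_all
  also have "\<dots> = ennreal c * H m f"
    by (simp add: infsum_cmult_right_ennreal H_eq_nn_integral_hess_step[OF f, of m]
        nn_integral_cell_decomp[OF borel_measurable_hess_step, symmetric])
  finally show ?thesis
    by (simp add: c_def)
qed

lemma H_uniformly_bounded:
  fixes f :: "real^'n::finite \<Rightarrow> real"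
  assumes f: "C2 f" and "l \<le> n"
  shows "H n f \<le> ennreal (2^((m-l) * CARD('n))) * H m f"
proof (cases "m \<le> n")
  case True
  then have "H n f \<le> 1 * H m f"
    using H_antimono[OF f] by simp
  also have "\<dots> \<le> ennreal (2^((m-l) * CARD('n))) * H m f"
    by (intro mult_right_mono) simp_all
  finally show ?thesis .
next
  case False
  then have "H n f \<le> ennreal (2^((m-n) * CARD('n))) * H m f"
    by (intro H_le_finer[OF f]) simp
  also have "\<dots> \<le> ennreal (2^((m-l) * CARD('n))) * H m f"
    using \<open>l \<le> n\<close> by (intro mult_right_mono ennreal_leI power_increasing) auto
  finally show ?thesis .
qed

lemma H_le_cmult_hess_int:
  fixes f :: "real^'n::finite \<Rightarrow> real"
  assumes f: "C2 f" and "H m f < \<infinity>"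
  obtains c :: real where "c > 0" "\<And>n. n0 \<le> n \<Longrightarrow> H n f \<le> ennreal c * hess_int f"
proof -
  have finite: "ennreal (2^((m-n0) * CARD('n))) * H m f < \<infinity>"
    using \<open>H m f < \<infinity>\<close> by (simp add: ennreal_mult_less_top)
  have bounded: "H n f \<le> ennreal (2^((m-n0) * CARD('n))) * H m f" if "n0 \<le> n" for n
    using H_uniformly_bounded[OF f that] .
  have zero: "H n f = 0" if "hess_int f = 0" for n
    using H_eq_0_if_hess_int_eq_0[OF f that] .
  show ?thesis
    using ennreal_le_cmult_if_bounded[where P = "\<lambda>n. n0 \<le> n" and x = "\<lambda>n. H n f"
        and I = "hess_int f", OF finite bounded zero] that by blast
qed

theorem theorem4p1:
  fixes f :: "real^'n::finite \<Rightarrow> real"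
  assumes "C2 f"
    and "\<exists>m. H m f < \<infinity>"
  shows "\<forall>n0::nat. \<exists>C::real. C > 0 \<and> (\<forall>n\<ge>n0.
           dsum n f \<le> TV f + ennreal (C * 2 powr (- real n)) * hess_int f \<and>
           TV f \<le> dsum n f + ennreal (C * 2 powr (- real n)) * hess_int f)"
proof
  fix n0 :: nat
  obtain m where "H m f < \<infinity>"
    using assms(2) by blast
  then obtain c where "c > 0" and c: "\<And>n. n0 \<le> n \<Longrightarrow> H n f \<le> ennreal c * hess_int f"
    using H_le_cmult_hess_int[OF assms(1)] by blast
  define C where "C = 2 * real CARD('n)^2 * c"
  have error: "ennreal (2 * real CARD('n)^2 / 2^n) * H n f \<le> ennreal (C * 2 powr (- real n)) * hess_int f"
    if "n0 \<le> n" for n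
    using mult_left_mono[OF c[OF that], of "ennreal (2 * real CARD('n)^2 / 2^n)"] \<open>c > 0\<close>
    by (simp add: C_def two_powr_minus ennreal_mult[symmetric] mult_ac)
  have "C > 0"
    using \<open>c > 0\<close> by (simp add: C_def)
  then show "\<exists>C::real. C > 0 \<and> (\<forall>n\<ge>n0.
           dsum n f \<le> TV f + ennreal (C * 2 powr (- real n)) * hess_int f \<and>
           TV f \<le> dsum n f + ennreal (C * 2 powr (- real n)) * hess_int f)"
    using order_trans[OF dsum_TV_estimate(1)[OF assms(1)] add_left_mono[OF error]]
      order_trans[OF dsum_TV_estimate(2)[OF assms(1)] add_left_mono[OF error]]
    by blast
qed

end
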